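(* Let $W$ and $V$ be binary-input channels such that $V$ is less noisy than $W$. Then for every $n\ge1$ and every $\mathbf{s}\in\{-,+\}^n$, $V^{\mathbf{s}}$ is less noisy than $W^{\mathbf{s}}$; in particular $I(W^{\mathbf{s}})\le I(V^{\mathbf{s}})$.
   Context: A binary-input channel $W\colon\{0,1\}\to\mathcal{Y}$ is a family of transition probabilities $W(y\mid x)$ on a discrete output alphabet; its symmetric capacity $I(W)$ is the mutual information (in bits) between a uniform input in $\{0,1\}$ and the output. A channel $V$ is less noisy than a channel $W$ with the same input alphabet if $I(T;Y)\le I(T;Z)$ for every joint distribution of the form $p(t,x,y,z)=p(x,t)W(y\mid x)V(z\mid x)$. For a binary-input channel $W$, define $W^-(y_1,y_2\mid u_1)=\sum_{u_2\in\{0,1\}}\tfrac12 W(y_1\mid u_1+u_2)W(y_2\mid u_2)$ and $W^+(y_1,y_2,u_1\mid u_2)=\tfrac12 W(y_1\mid u_1+u_2)W(y_2\mid u_2)$ (addition mod 2), and recursively $W^{s_1\cdots s_n}=(W^{s_1\cdots s_{n-1}})^{s_n}$ for $\mathbf{s}=(s_1,\dots,s_n)\in\{-,+\}^n$. *)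

theory Defs
  imports Main "HOL-Library.Log_Nat" Complex_Main
begin

text \<open>Output alphabet closed under the polar transforms: base outputs, the
  output pair (y1,y2) of the minus channel, and the output triple (y1,y2,u1) of the
  plus channel. Bits in {0,1} are represented by bool (False = 0, True = 1),
  addition mod 2 is inequality of booleans.\<close>
datatype 'y outp = Base 'y | MinusOut "'y outp" "'y outp" | PlusOut "'y outp" "'y outp" bool

datatype sign = Minus | Plus

definition channel :: "(bool \<Rightarrow> 'y \<Rightarrow> real) \<Rightarrow> bool" where
  "channel W \<longleftrightarrow> (\<forall>x y. 0 \<le> W x y) \<and> finite {y. \<exists>x. W x y \<noteq> 0} \<and>
     (\<forall>x. (\<Sum>y\<in>{y. \<exists>x. W x y \<noteq> 0}. W x y) = 1)"

definition lift :: "(bool \<Rightarrow> 'y \<Rightarrow> real) \<Rightarrow> bool \<Rightarrow> 'y outp \<Rightarrow> real" where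
  "lift W x y = (case y of Base b \<Rightarrow> W x b | _ \<Rightarrow> 0)"

definition minus_ch :: "(bool \<Rightarrow> 'y outp \<Rightarrow> real) \<Rightarrow> bool \<Rightarrow> 'y outp \<Rightarrow> real" where
  "minus_ch W u1 y = (case y of MinusOut y1 y2 \<Rightarrow>
      (\<Sum>u2\<in>(UNIV::bool set). 1/2 * W (u1 \<noteq> u2) y1 * W u2 y2) | _ \<Rightarrow> 0)"

definition plus_ch :: "(bool \<Rightarrow> 'y outp \<Rightarrow> real) \<Rightarrow> bool \<Rightarrow> 'y outp \<Rightarrow> real" where
  "plus_ch W u2 y = (case y of PlusOut y1 y2 u1 \<Rightarrow> 1/2 * W (u1 \<noteq> u2) y1 * W u2 y2 | _ \<Rightarrow> 0)"

fun transform :: "sign \<Rightarrow> (bool \<Rightarrow> 'y outp \<Rightarrow> real) \<Rightarrow> bool \<Rightarrow> 'y outp \<Rightarrow> real" where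
  "transform Minus W = minus_ch W"
| "transform Plus W = plus_ch W"

text \<open>W^{s1...sn} = (W^{s1...s(n-1)})^{sn}: s1 is applied first.\<close>
definition polar :: "sign list \<Rightarrow> (bool \<Rightarrow> 'y outp \<Rightarrow> real) \<Rightarrow> bool \<Rightarrow> 'y outp \<Rightarrow> real" where
  "polar s W = fold transform s W"

definition mutual_info :: "('a \<Rightarrow> 'b \<Rightarrow> real) \<Rightarrow> real" where
  "mutual_info q = (let A = {a. \<exists>b. q a b \<noteq> 0}; B = {b. \<exists>a. q a b \<noteq> 0};
      pa = (\<lambda>a. \<Sum>b\<in>B. q a b); pb = (\<lambda>b. \<Sum>a\<in>A. q a b)
    in \<Sum>a\<in>A. \<Sum>b\<in>B. (if q a b = 0 then 0 else q a b * log 2 (q a b / (pa a * pb b))))"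

definition sym_capacity :: "(bool \<Rightarrow> 'y \<Rightarrow> real) \<Rightarrow> real" where
  "sym_capacity W = mutual_info (\<lambda>x y. 1/2 * W x y)"

text \<open>Joint distributions p(t,x) of an auxiliary variable T (finite alphabet,
  encoded in nat) and the channel input X.\<close>
definition joint_pmf :: "(nat \<Rightarrow> bool \<Rightarrow> real) \<Rightarrow> bool" where
  "joint_pmf p \<longleftrightarrow> (\<forall>t x. 0 \<le> p t x) \<and> finite {t. \<exists>x. p t x \<noteq> 0} \<and>
     (\<Sum>t\<in>{t. \<exists>x. p t x \<noteq> 0}. \<Sum>x\<in>(UNIV::bool set). p t x) = 1"

definition joint_out :: "(nat \<Rightarrow> bool \<Rightarrow> real) \<Rightarrow> (bool \<Rightarrow> 'y \<Rightarrow> real) \<Rightarrow> nat \<Rightarrow> 'y \<Rightarrow> real" where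
  "joint_out p W t y = (\<Sum>x\<in>(UNIV::bool set). p t x * W x y)"

definition less_noisy :: "(bool \<Rightarrow> 'z \<Rightarrow> real) \<Rightarrow> (bool \<Rightarrow> 'y \<Rightarrow> real) \<Rightarrow> bool" where
  "less_noisy V W \<longleftrightarrow> (\<forall>p. joint_pmf p \<longrightarrow>
      mutual_info (joint_out p W) \<le> mutual_info (joint_out p V))"

end

theory Submission
  imports Defs
begin

text \<open>By the chain rule \<open>I(T; Y\<^sub>1 Y\<^sub>2) = I(T; Y\<^sub>1) + I(T; Y\<^sub>2 | Y\<^sub>1)\<close>, and given
  \<open>Y\<^sub>1 = a\<close> the variables \<open>T \<rightarrow> X\<^sub>2 \<rightarrow> Y\<^sub>2\<close> still form a Markov chain through the
  second factor; so replacing one factor of a product channel by a less noisy one keeps it less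
  noisy, and \<open>V \<otimes> V\<close> is less noisy than \<open>W \<otimes> W\<close>. Now \<open>W\<^sup>-\<close> is \<open>W \<otimes> W\<close> fed with
  \<open>(U\<^sub>1 \<oplus> U\<^sub>2, U\<^sub>2)\<close> for a uniform \<open>U\<^sub>2\<close>, so a pair \<open>(T, U\<^sub>1)\<close> for \<open>W\<^sup>-\<close> is a pair
  \<open>(T, X)\<close> for \<open>W \<otimes> W\<close>. The extra output \<open>U\<^sub>1\<close> of \<open>W\<^sup>+\<close> is uniform and independent
  of \<open>T\<close>, so the chain rule over \<open>U\<^sub>1\<close> again reduces \<open>W\<^sup>+\<close> to \<open>W \<otimes> W\<close>. Induction
  along \<open>s\<close> gives the first claim; the second is the case \<open>T = X\<close> with \<open>X\<close> uniform.\<close>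

lemma sum_UNIV_prod:
  "(\<Sum>x\<in>(UNIV::('a::finite \<times> 'b::finite) set). f x) = (\<Sum>x1\<in>UNIV. \<Sum>x2\<in>UNIV. f (x1, x2))"
  unfolding UNIV_Times_UNIV[symmetric] sum.cartesian_product by (simp add: case_prod_beta)

lemma sum_Times_mult:
  fixes c :: real
  shows "(\<Sum>y\<in>A \<times> B. c * f (fst y) * g (snd y)) = c * sum f A * sum g B"
proof -
  have "(\<Sum>y\<in>A \<times> B. c * f (fst y) * g (snd y)) = (\<Sum>a\<in>A. \<Sum>b\<in>B. c * (f a * g b))"
    unfolding sum.cartesian_product by (intro sum.cong refl) (simp add: case_prod_beta mult.assoc)
  also have "\<dots> = c * (sum f A * sum g B)"
    by (subst sum_product) (simp add: sum_distrib_left)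
  finally show ?thesis by (simp add: mult.assoc)
qed

definition mutual_info_on :: "'a set \<Rightarrow> 'b set \<Rightarrow> ('a \<Rightarrow> 'b \<Rightarrow> real) \<Rightarrow> real" where
  "mutual_info_on A B q =
     (\<Sum>a\<in>A. \<Sum>b\<in>B. q a b * log 2 (q a b / ((\<Sum>b'\<in>B. q a b') * (\<Sum>a'\<in>A. q a' b))))"

lemma mutual_info_on_cong:
  "(\<And>a b. a \<in> A \<Longrightarrow> b \<in> B \<Longrightarrow> q a b = q' a b) \<Longrightarrow> mutual_info_on A B q = mutual_info_on A B q'"
  unfolding mutual_info_on_def by (intro sum.cong refl) auto

lemma mutual_info_eq_on:
  assumes A: "finite A" and B: "finite B" and supp: "\<And>a b. q a b \<noteq> 0 \<Longrightarrow> a \<in> A \<and> b \<in> B"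
  shows "mutual_info q = mutual_info_on A B q"
proof -
  define A0 where "A0 = {a. \<exists>b. q a b \<noteq> 0}"
  define B0 where "B0 = {b. \<exists>a. q a b \<noteq> 0}"
  have "A0 \<subseteq> A" and "B0 \<subseteq> B" using supp by (auto simp: A0_def B0_def)
  have marg_A: "(\<Sum>b\<in>B0. q a b) = (\<Sum>b\<in>B. q a b)" for a
    by (rule sum.mono_neutral_left[OF B \<open>B0 \<subseteq> B\<close>]) (auto simp: B0_def)
  have marg_B: "(\<Sum>a\<in>A0. q a b) = (\<Sum>a\<in>A. q a b)" for b
    by (rule sum.mono_neutral_left[OF A \<open>A0 \<subseteq> A\<close>]) (auto simp: A0_def)
  have "mutual_info q = (\<Sum>a\<in>A0. \<Sum>b\<in>B0.
      q a b * log 2 (q a b / ((\<Sum>b'\<in>B. q a b') * (\<Sum>a'\<in>A. q a' b))))"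
    unfolding mutual_info_def Let_def A0_def[symmetric] B0_def[symmetric] marg_A marg_B
    by (intro sum.cong refl) auto
  also have "\<dots> = (\<Sum>a\<in>A. \<Sum>b\<in>B0.
      q a b * log 2 (q a b / ((\<Sum>b'\<in>B. q a b') * (\<Sum>a'\<in>A. q a' b))))"
    by (rule sum.mono_neutral_left[OF A \<open>A0 \<subseteq> A\<close>]) (auto simp: A0_def intro!: sum.neutral)
  also have "\<dots> = mutual_info_on A B q"
    unfolding mutual_info_on_def
    by (intro sum.cong refl sum.mono_neutral_left[OF B \<open>B0 \<subseteq> B\<close>]) (auto simp: B0_def)
  finally show ?thesis .
qed

lemma mutual_info_reindex:
  fixes q :: "'a \<Rightarrow> 'b \<Rightarrow> real" and q' :: "'c \<Rightarrow> 'd \<Rightarrow> real"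
  assumes A: "finite A" and B: "finite B" and supp: "\<And>a b. q a b \<noteq> 0 \<Longrightarrow> a \<in> A \<and> b \<in> B"
    and f: "inj_on f A" and g: "inj_on g B"
    and supp': "\<And>a b. q' a b \<noteq> 0 \<Longrightarrow> a \<in> f ` A \<and> b \<in> g ` B"
    and val: "\<And>a b. a \<in> A \<Longrightarrow> b \<in> B \<Longrightarrow> q' (f a) (g b) = q a b"
  shows "mutual_info q' = mutual_info q"
proof -
  have "mutual_info q' = mutual_info_on (f ` A) (g ` B) q'"
    using A B supp' by (intro mutual_info_eq_on) auto
  also have "\<dots> = mutual_info_on A B q"
    unfolding mutual_info_on_def using f g by (simp add: sum.reindex val)
  also have "\<dots> = mutual_info q"
    using mutual_info_eq_on[OF A B supp] by simp
  finally show ?thesis .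
qed

text \<open>One summand of the chain rule: \<open>x = p(t,a,b)\<close>, \<open>q1 = p(t,a)\<close>, \<open>qT = p(t)\<close>,
  \<open>qA = p(a)\<close>, \<open>qAB = p(a,b)\<close>.\<close>
lemma xlog_chain_rule:
  fixes x q1 qT qA qAB :: real
  assumes "0 \<le> x" "x \<le> q1" "q1 \<le> qT" "q1 \<le> qA" "x \<le> qAB"
  shows "x * log 2 (x / (qT * qAB)) =
    x * log 2 (q1 / (qT * qA)) + qA * ((x / qA) * log 2 ((x / qA) / ((q1 / qA) * (qAB / qA))))"
proof (cases "x = 0")
  case False
  then have pos: "x > 0" "q1 > 0" "qT > 0" "qA > 0" "qAB > 0" using assms by linarith+
  have split: "x / (qT * qAB) = (q1 / (qT * qA)) * ((x / qA) / ((q1 / qA) * (qAB / qA)))"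
    using pos by (simp add: field_simps)
  have "log 2 (x / (qT * qAB)) = log 2 (q1 / (qT * qA)) + log 2 ((x / qA) / ((q1 / qA) * (qAB / qA)))"
    unfolding split using pos by (intro log_mult_pos) auto
  then show ?thesis using pos by (simp add: field_simps)
qed simp

lemma mutual_info_on_chain_rule:
  fixes q :: "'t \<Rightarrow> 'a \<times> 'b \<Rightarrow> real"
  assumes S: "finite S" and A: "finite A" and B: "finite B" and nonneg: "\<And>t y. 0 \<le> q t y"
  shows "mutual_info_on S (A \<times> B) q = mutual_info_on S A (\<lambda>t a. \<Sum>b\<in>B. q t (a, b)) +
     (\<Sum>a\<in>A. (\<Sum>t\<in>S. \<Sum>b\<in>B. q t (a, b)) *
        mutual_info_on S B (\<lambda>t b. q t (a, b) / (\<Sum>t\<in>S. \<Sum>b\<in>B. q t (a, b))))"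
proof -
  define q1 where "q1 t a = (\<Sum>b\<in>B. q t (a, b))" for t a
  define qT where "qT t = (\<Sum>a\<in>A. q1 t a)" for t
  define qA where "qA a = (\<Sum>t\<in>S. q1 t a)" for a
  define qAB where "qAB a b = (\<Sum>t\<in>S. q t (a, b))" for a b
  have qA_eq: "(\<Sum>t\<in>S. \<Sum>b\<in>B. q t (a, b)) = qA a" for a
    by (simp add: qA_def q1_def)
  have "mutual_info_on S (A \<times> B) q =
      (\<Sum>t\<in>S. \<Sum>a\<in>A. \<Sum>b\<in>B. q t (a, b) * log 2 (q t (a, b) / (qT t * qAB a b)))"
    unfolding mutual_info_on_def
    by (simp add: sum.cartesian_product qAB_def qT_def q1_def)
  also have "\<dots> = (\<Sum>t\<in>S. \<Sum>a\<in>A. \<Sum>b\<in>B. q t (a, b) * log 2 (q1 t a / (qT t * qA a)) +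
      qA a * ((q t (a, b) / qA a) * log 2 ((q t (a, b) / qA a) / ((q1 t a / qA a) * (qAB a b / qA a)))))"
  proof (intro sum.cong refl xlog_chain_rule)
    fix t a b assume "t \<in> S" "a \<in> A" "b \<in> B"
    with S A B nonneg
    show "q t (a, b) \<le> q1 t a" "q1 t a \<le> qT t" "q1 t a \<le> qA a" "q t (a, b) \<le> qAB a b"
      unfolding q1_def qT_def qA_def qAB_def
      by (auto intro!: member_le_sum sum_nonneg)
  qed (rule nonneg)
  also have "\<dots> = mutual_info_on S A q1 +
      (\<Sum>a\<in>A. qA a * mutual_info_on S B (\<lambda>t b. q t (a, b) / qA a))"
  proof -
    have "mutual_info_on S A q1 = (\<Sum>t\<in>S. \<Sum>a\<in>A. \<Sum>b\<in>B. q t (a, b) * log 2 (q1 t a / (qT t * qA a)))"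
      unfolding mutual_info_on_def qT_def qA_def
      by (intro sum.cong refl) (simp add: q1_def sum_distrib_right)
    moreover have "qA a * mutual_info_on S B (\<lambda>t b. q t (a, b) / qA a) = (\<Sum>t\<in>S. \<Sum>b\<in>B.
        qA a * ((q t (a, b) / qA a) * log 2 ((q t (a, b) / qA a) / ((q1 t a / qA a) * (qAB a b / qA a)))))"
      for a
      unfolding mutual_info_on_def sum_divide_distrib[symmetric]
      by (simp add: q1_def qAB_def sum_distrib_left)
    ultimately show ?thesis
      by (simp add: sum.distrib sum.swap[of _ A S])
  qed
  finally show ?thesis unfolding qA_eq q1_def .
qed

lemma mutual_info_le_by_conditioning:
  fixes q :: "'t \<Rightarrow> 'a \<times> 'b \<Rightarrow> real" and q' :: "'t \<Rightarrow> 'a \<times> 'c \<Rightarrow> real"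
  assumes S: "finite S" and A: "finite A" and B: "finite B" and B': "finite B'"
    and nonneg: "\<And>t y. 0 \<le> q t y" and nonneg': "\<And>t y. 0 \<le> q' t y"
    and supp: "\<And>t y. q t y \<noteq> 0 \<Longrightarrow> t \<in> S \<and> y \<in> A \<times> B"
    and supp': "\<And>t y. q' t y \<noteq> 0 \<Longrightarrow> t \<in> S \<and> y \<in> A \<times> B'"
    and marg: "\<And>t a. t \<in> S \<Longrightarrow> a \<in> A \<Longrightarrow> (\<Sum>b\<in>B. q t (a, b)) = (\<Sum>b\<in>B'. q' t (a, b))"
    and cond: "\<And>a. a \<in> A \<Longrightarrow> (\<Sum>t\<in>S. \<Sum>b\<in>B. q t (a, b)) > 0 \<Longrightarrow>
       mutual_info (\<lambda>t b. q t (a, b) / (\<Sum>t\<in>S. \<Sum>b\<in>B. q t (a, b))) \<le>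
       mutual_info (\<lambda>t b. q' t (a, b) / (\<Sum>t\<in>S. \<Sum>b\<in>B. q t (a, b)))"
  shows "mutual_info q \<le> mutual_info q'"
proof -
  define qA where "qA a = (\<Sum>t\<in>S. \<Sum>b\<in>B. q t (a, b))" for a
  have qA': "(\<Sum>t\<in>S. \<Sum>b\<in>B'. q' t (a, b)) = qA a" if "a \<in> A" for a
    unfolding qA_def using marg that by (intro sum.cong) auto
  have cond_le: "qA a * mutual_info_on S B (\<lambda>t b. q t (a, b) / qA a) \<le>
      qA a * mutual_info_on S B' (\<lambda>t b. q' t (a, b) / qA a)" if a: "a \<in> A" for a
  proof (cases "qA a = 0")
    case False
    moreover have "qA a \<ge> 0"
      unfolding qA_def using nonneg by (intro sum_nonneg) auto
    ultimately have pos: "qA a > 0" by simp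
    have "mutual_info_on S B (\<lambda>t b. q t (a, b) / qA a) = mutual_info (\<lambda>t b. q t (a, b) / qA a)"
      using supp S B by (intro mutual_info_eq_on[symmetric]) auto
    also have "\<dots> \<le> mutual_info (\<lambda>t b. q' t (a, b) / qA a)"
      using cond[OF a] pos unfolding qA_def by simp
    also have "\<dots> = mutual_info_on S B' (\<lambda>t b. q' t (a, b) / qA a)"
      using supp' S B' by (intro mutual_info_eq_on) auto
    finally show ?thesis using pos by (intro mult_left_mono) auto
  qed simp
  have "mutual_info q = mutual_info_on S A (\<lambda>t a. \<Sum>b\<in>B. q t (a, b)) +
      (\<Sum>a\<in>A. qA a * mutual_info_on S B (\<lambda>t b. q t (a, b) / qA a))"
    using mutual_info_eq_on[OF S finite_cartesian_product[OF A B] supp]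
      mutual_info_on_chain_rule[OF S A B nonneg]
    unfolding qA_def by simp
  also have "\<dots> \<le> mutual_info_on S A (\<lambda>t a. \<Sum>b\<in>B'. q' t (a, b)) +
      (\<Sum>a\<in>A. qA a * mutual_info_on S B' (\<lambda>t b. q' t (a, b) / qA a))"
  proof (intro add_mono sum_mono)
    show "mutual_info_on S A (\<lambda>t a. \<Sum>b\<in>B. q t (a, b)) \<le>
        mutual_info_on S A (\<lambda>t a. \<Sum>b\<in>B'. q' t (a, b))"
      using marg by (intro mutual_info_on_cong[THEN eq_refl])
  qed (rule cond_le)
  also have "\<dots> = mutual_info q'"
    using mutual_info_eq_on[OF S finite_cartesian_product[OF A B'] supp']
      mutual_info_on_chain_rule[OF S A B' nonneg']
    by (simp add: qA')
  finally show ?thesis .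
qed

text \<open>\<^const>\<open>channel\<close>, \<^const>\<open>joint_pmf\<close>, \<^const>\<open>joint_out\<close> and \<^const>\<open>less_noisy\<close>
  with the input ranging over an arbitrary finite type, so that they apply to \<open>W \<otimes> W\<close>.\<close>
definition out_supp :: "('x \<Rightarrow> 'y \<Rightarrow> real) \<Rightarrow> 'y set" where
  "out_supp W = {y. \<exists>x. W x y \<noteq> 0}"

definition stoch_kernel :: "('x \<Rightarrow> 'y \<Rightarrow> real) \<Rightarrow> bool" where
  "stoch_kernel W \<longleftrightarrow>
     (\<forall>x y. 0 \<le> W x y) \<and> finite (out_supp W) \<and> (\<forall>x. (\<Sum>y\<in>out_supp W. W x y) = 1)"

definition aux_supp :: "('t \<Rightarrow> 'x \<Rightarrow> real) \<Rightarrow> 't set" where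
  "aux_supp P = {t. \<exists>x. P t x \<noteq> 0}"

definition aux_pmf :: "('t \<Rightarrow> 'x::finite \<Rightarrow> real) \<Rightarrow> bool" where
  "aux_pmf P \<longleftrightarrow>
     (\<forall>t x. 0 \<le> P t x) \<and> finite (aux_supp P) \<and> (\<Sum>t\<in>aux_supp P. \<Sum>x\<in>UNIV. P t x) = 1"

definition joint_via :: "('t \<Rightarrow> 'x::finite \<Rightarrow> real) \<Rightarrow> ('x \<Rightarrow> 'y \<Rightarrow> real) \<Rightarrow> 't \<Rightarrow> 'y \<Rightarrow> real" where
  "joint_via P W t y = (\<Sum>x\<in>UNIV. P t x * W x y)"

definition less_noisy_kernel :: "('x::finite \<Rightarrow> 'z \<Rightarrow> real) \<Rightarrow> ('x \<Rightarrow> 'y \<Rightarrow> real) \<Rightarrow> bool" where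
  "less_noisy_kernel V W \<longleftrightarrow> (\<forall>P::nat \<Rightarrow> 'x \<Rightarrow> real.
     aux_pmf P \<longrightarrow> mutual_info (joint_via P W) \<le> mutual_info (joint_via P V))"

lemma channel_iff_stoch_kernel: "channel W \<longleftrightarrow> stoch_kernel W"
  unfolding channel_def stoch_kernel_def out_supp_def ..

lemma less_noisy_iff_kernel: "less_noisy V W \<longleftrightarrow> less_noisy_kernel V W"
  unfolding less_noisy_def less_noisy_kernel_def joint_pmf_def aux_pmf_def joint_out_def
    joint_via_def aux_supp_def ..

lemma out_suppI: "W x y \<noteq> 0 \<Longrightarrow> y \<in> out_supp W"
  unfolding out_supp_def by auto

lemma aux_suppI: "P t x \<noteq> 0 \<Longrightarrow> t \<in> aux_supp P"
  unfolding aux_supp_def by auto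

lemma stoch_kernel_nonneg: "stoch_kernel W \<Longrightarrow> 0 \<le> W x y"
  unfolding stoch_kernel_def by auto

lemma stoch_kernel_finite_supp: "stoch_kernel W \<Longrightarrow> finite (out_supp W)"
  unfolding stoch_kernel_def by auto

lemma stoch_kernel_sum: "stoch_kernel W \<Longrightarrow> (\<Sum>y\<in>out_supp W. W x y) = 1"
  unfolding stoch_kernel_def by blast

lemma stoch_kernelI:
  assumes "\<And>x y. 0 \<le> W x y" and "finite Y" and "\<And>x y. W x y \<noteq> 0 \<Longrightarrow> y \<in> Y"
    and "\<And>x. (\<Sum>y\<in>Y. W x y) = 1"
  shows "stoch_kernel W"
proof -
  have "out_supp W \<subseteq> Y" using assms(3) by (auto simp: out_supp_def)
  moreover from this have "(\<Sum>y\<in>out_supp W. W x y) = (\<Sum>y\<in>Y. W x y)" for x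
    using assms(2) by (intro sum.mono_neutral_left) (auto simp: out_supp_def)
  ultimately show ?thesis
    unfolding stoch_kernel_def using assms finite_subset by auto
qed

lemma aux_pmf_nonneg: "aux_pmf P \<Longrightarrow> 0 \<le> P t x"
  unfolding aux_pmf_def by auto

lemma aux_pmf_finite_supp: "aux_pmf P \<Longrightarrow> finite (aux_supp P)"
  unfolding aux_pmf_def by auto

lemma aux_pmf_sum: "aux_pmf P \<Longrightarrow> (\<Sum>t\<in>aux_supp P. \<Sum>x\<in>UNIV. P t x) = 1"
  unfolding aux_pmf_def by auto

lemma aux_pmfI:
  assumes "\<And>t x. 0 \<le> P t x" and "finite S" and "aux_supp P \<subseteq> S"
    and "(\<Sum>t\<in>S. \<Sum>x\<in>UNIV. P t x) = 1"
  shows "aux_pmf P"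
proof -
  have "(\<Sum>t\<in>aux_supp P. \<Sum>x\<in>UNIV. P t x) = (\<Sum>t\<in>S. \<Sum>x\<in>UNIV. P t x)"
    using assms(2,3) by (intro sum.mono_neutral_left) (auto simp: aux_supp_def)
  then show ?thesis
    unfolding aux_pmf_def using assms finite_subset by auto
qed

lemma aux_pmf_transfer:
  assumes P: "aux_pmf P" and "\<And>t x. 0 \<le> Q t x" and "aux_supp Q \<subseteq> aux_supp P"
    and "\<And>t. (\<Sum>x\<in>UNIV. Q t x) = (\<Sum>x\<in>UNIV. P t x)"
  shows "aux_pmf Q"
  using assms aux_pmf_finite_supp[OF P] aux_pmf_sum[OF P] by (intro aux_pmfI) auto

lemma aux_pmf_normalize:
  assumes "\<And>t x. 0 \<le> P t x" and "finite S" and "aux_supp P \<subseteq> S"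
    and "c = (\<Sum>t\<in>S. \<Sum>x\<in>UNIV. P t x)" and "c > 0"
  shows "aux_pmf (\<lambda>t x. P t x / c)"
proof (rule aux_pmfI[where S=S])
  show "aux_supp (\<lambda>t x. P t x / c) \<subseteq> S"
    using assms(3,5) by (auto simp: aux_supp_def)
  show "(\<Sum>t\<in>S. \<Sum>x\<in>UNIV. P t x / c) = 1"
    using assms(5) by (simp add: sum_divide_distrib[symmetric] assms(4)[symmetric])
qed (use assms(1,2,5) in auto)

lemma joint_via_nonneg: "aux_pmf P \<Longrightarrow> stoch_kernel W \<Longrightarrow> 0 \<le> joint_via P W t y"
  unfolding joint_via_def by (intro sum_nonneg mult_nonneg_nonneg aux_pmf_nonneg stoch_kernel_nonneg)

lemma joint_via_supp:
  assumes "joint_via P W t y \<noteq> 0" shows "t \<in> aux_supp P \<and> y \<in> out_supp W"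
proof -
  obtain x where "P t x * W x y \<noteq> 0"
    using assms unfolding joint_via_def by (meson sum.not_neutral_contains_not_neutral)
  then show ?thesis by (auto intro: aux_suppI out_suppI)
qed

lemma joint_via_scale: "joint_via (\<lambda>t x. P t x / c) W = (\<lambda>t y. joint_via P W t y / c)"
  unfolding joint_via_def by (simp add: sum_divide_distrib)

definition prod_kernel ::
    "('x1 \<Rightarrow> 'y1 \<Rightarrow> real) \<Rightarrow> ('x2 \<Rightarrow> 'y2 \<Rightarrow> real) \<Rightarrow> 'x1 \<times> 'x2 \<Rightarrow> 'y1 \<times> 'y2 \<Rightarrow> real" where
  "prod_kernel W1 W2 x y = W1 (fst x) (fst y) * W2 (snd x) (snd y)"

lemma out_supp_prod_kernel: "out_supp (prod_kernel W1 W2) \<subseteq> out_supp W1 \<times> out_supp W2"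
  unfolding out_supp_def prod_kernel_def by auto

lemma stoch_kernel_prod:
  assumes W1: "stoch_kernel W1" and W2: "stoch_kernel W2"
  shows "stoch_kernel (prod_kernel W1 W2)"
proof (rule stoch_kernelI[where Y="out_supp W1 \<times> out_supp W2"])
  show "0 \<le> prod_kernel W1 W2 x y" for x y
    unfolding prod_kernel_def using W1 W2 by (intro mult_nonneg_nonneg stoch_kernel_nonneg)
  show "finite (out_supp W1 \<times> out_supp W2)"
    using W1 W2 by (simp add: stoch_kernel_finite_supp)
  show "prod_kernel W1 W2 x y \<noteq> 0 \<Longrightarrow> y \<in> out_supp W1 \<times> out_supp W2" for x y
    using out_suppI[of "prod_kernel W1 W2" x y] out_supp_prod_kernel by blast
  show "(\<Sum>y\<in>out_supp W1 \<times> out_supp W2. prod_kernel W1 W2 x y) = 1" for x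
    using sum_Times_mult[where c=1 and f="W1 (fst x)" and g="W2 (snd x)"
        and A="out_supp W1" and B="out_supp W2"]
    unfolding prod_kernel_def by (simp add: stoch_kernel_sum W1 W2)
qed

lemma joint_via_prod_supp:
  "joint_via P (prod_kernel W1 W2) t y \<noteq> 0 \<Longrightarrow> t \<in> aux_supp P \<and> y \<in> out_supp W1 \<times> out_supp W2"
  using joint_via_supp[of P "prod_kernel W1 W2" t y] out_supp_prod_kernel by blast

text \<open>The joint law of \<open>(T, X\<^sub>2)\<close> together with the event \<open>Y\<^sub>1 = a\<close>, not normalised.\<close>
definition cond_input ::
    "('t \<Rightarrow> 'x1::finite \<times> 'x2 \<Rightarrow> real) \<Rightarrow> ('x1 \<Rightarrow> 'y1 \<Rightarrow> real) \<Rightarrow> 'y1 \<Rightarrow> 't \<Rightarrow> 'x2 \<Rightarrow> real" where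
  "cond_input P W1 a t x2 = (\<Sum>x1\<in>UNIV. P t (x1, x2) * W1 x1 a)"

lemma cond_input_nonneg: "aux_pmf P \<Longrightarrow> stoch_kernel W1 \<Longrightarrow> 0 \<le> cond_input P W1 a t x"
  unfolding cond_input_def by (intro sum_nonneg mult_nonneg_nonneg aux_pmf_nonneg stoch_kernel_nonneg)

lemma aux_supp_cond_input: "aux_supp (cond_input P W1 a) \<subseteq> aux_supp P"
proof
  fix t assume "t \<in> aux_supp (cond_input P W1 a)"
  then obtain x2 where "cond_input P W1 a t x2 \<noteq> 0"
    unfolding aux_supp_def by blast
  then obtain x1 where "P t (x1, x2) * W1 x1 a \<noteq> 0"
    unfolding cond_input_def by (rule sum.not_neutral_contains_not_neutral)
  then show "t \<in> aux_supp P"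
    using aux_suppI[of P t "(x1, x2)"] by simp
qed

lemma joint_via_prod_marginal:
  assumes W2: "stoch_kernel W2"
  shows "(\<Sum>b\<in>out_supp W2. joint_via P (prod_kernel W1 W2) t (a, b)) =
    (\<Sum>x2\<in>UNIV. cond_input P W1 a t x2)"
proof -
  have "(\<Sum>b\<in>out_supp W2. joint_via P (prod_kernel W1 W2) t (a, b)) =
      (\<Sum>x\<in>UNIV. P t x * W1 (fst x) a * (\<Sum>b\<in>out_supp W2. W2 (snd x) b))"
    unfolding joint_via_def prod_kernel_def by (subst sum.swap) (simp add: sum_distrib_left mult.assoc)
  also have "\<dots> = (\<Sum>x\<in>UNIV. P t x * W1 (fst x) a)"
    using stoch_kernel_sum[OF W2] by simp
  also have "\<dots> = (\<Sum>x2\<in>UNIV. cond_input P W1 a t x2)"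
    unfolding cond_input_def sum_UNIV_prod by (subst sum.swap) simp
  finally show ?thesis .
qed

lemma joint_via_prod_slice:
  "joint_via P (prod_kernel W1 W2) t (a, b) = joint_via (cond_input P W1 a) W2 t b"
  unfolding joint_via_def prod_kernel_def cond_input_def sum_UNIV_prod sum_distrib_right
  by (subst sum.swap) (simp add: mult_ac)

lemma less_noisy_kernel_prod_right:
  fixes W1 :: "'x1::finite \<Rightarrow> 'y1 \<Rightarrow> real" and W2 :: "'x2::finite \<Rightarrow> 'y2 \<Rightarrow> real"
    and V2 :: "'x2 \<Rightarrow> 'z2 \<Rightarrow> real"
  assumes W1: "stoch_kernel W1" and W2: "stoch_kernel W2" and V2: "stoch_kernel V2"
    and less_noisy: "less_noisy_kernel V2 W2"
  shows "less_noisy_kernel (prod_kernel W1 V2) (prod_kernel W1 W2)"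
  unfolding less_noisy_kernel_def
proof (intro allI impI)
  fix P :: "nat \<Rightarrow> 'x1 \<times> 'x2 \<Rightarrow> real" assume P: "aux_pmf P"
  show "mutual_info (joint_via P (prod_kernel W1 W2)) \<le>
      mutual_info (joint_via P (prod_kernel W1 V2))"
  proof (rule mutual_info_le_by_conditioning[where S="aux_supp P" and A="out_supp W1"
        and B="out_supp W2" and B'="out_supp V2"])
    fix a
    define c where "c = (\<Sum>t\<in>aux_supp P. \<Sum>b\<in>out_supp W2. joint_via P (prod_kernel W1 W2) t (a, b))"
    assume "c > 0"
    moreover have "c = (\<Sum>t\<in>aux_supp P. \<Sum>x2\<in>UNIV. cond_input P W1 a t x2)"
      unfolding c_def joint_via_prod_marginal[OF W2] ..
    ultimately have "aux_pmf (\<lambda>t x. cond_input P W1 a t x / c)"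
      using P W1 aux_supp_cond_input aux_pmf_finite_supp
      by (intro aux_pmf_normalize[where S="aux_supp P"] cond_input_nonneg)
    then have "mutual_info (joint_via (\<lambda>t x. cond_input P W1 a t x / c) W2) \<le>
        mutual_info (joint_via (\<lambda>t x. cond_input P W1 a t x / c) V2)"
      using less_noisy unfolding less_noisy_kernel_def by blast
    then show "mutual_info (\<lambda>t b. joint_via P (prod_kernel W1 W2) t (a, b) / c) \<le>
        mutual_info (\<lambda>t b. joint_via P (prod_kernel W1 V2) t (a, b) / c)"
      by (simp add: joint_via_scale joint_via_prod_slice)
  next
    show "finite (aux_supp P)" using P by (rule aux_pmf_finite_supp)
    show "finite (out_supp W1)" "finite (out_supp W2)" "finite (out_supp V2)"
      using W1 W2 V2 by (simp_all add: stoch_kernel_finite_supp)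
    show "0 \<le> joint_via P (prod_kernel W1 W2) t y" "0 \<le> joint_via P (prod_kernel W1 V2) t y'" for t y y'
      using P W1 W2 V2 by (simp_all add: joint_via_nonneg stoch_kernel_prod)
    show "joint_via P (prod_kernel W1 W2) t y \<noteq> 0 \<Longrightarrow> t \<in> aux_supp P \<and> y \<in> out_supp W1 \<times> out_supp W2"
      "joint_via P (prod_kernel W1 V2) t y' \<noteq> 0 \<Longrightarrow> t \<in> aux_supp P \<and> y' \<in> out_supp W1 \<times> out_supp V2"
      for t y y' by (simp_all add: joint_via_prod_supp)
    show "(\<Sum>b\<in>out_supp W2. joint_via P (prod_kernel W1 W2) t (a, b)) =
        (\<Sum>b\<in>out_supp V2. joint_via P (prod_kernel W1 V2) t (a, b))" for t a
      by (simp add: joint_via_prod_marginal W2 V2)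
  qed
qed

lemma aux_supp_swap: "aux_supp (\<lambda>t x. P t (prod.swap x)) = aux_supp P"
  unfolding aux_supp_def by (metis swap_swap)

lemma sum_UNIV_swap:
  "(\<Sum>x\<in>(UNIV::('a::finite \<times> 'b::finite) set). f (prod.swap x)) = (\<Sum>x\<in>UNIV. f x)"
  unfolding sum_UNIV_prod prod.swap_def fst_conv snd_conv by (rule sum.swap)

lemma aux_pmf_swap: "aux_pmf P \<Longrightarrow> aux_pmf (\<lambda>t x. P t (prod.swap x))"
  by (rule aux_pmf_transfer) (auto simp: aux_pmf_nonneg aux_supp_swap sum_UNIV_swap)

lemma mutual_info_joint_via_prod_swap:
  assumes P: "finite (aux_supp P)" and W1: "stoch_kernel W1" and W2: "stoch_kernel W2"
  shows "mutual_info (joint_via P (prod_kernel W1 W2)) =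
    mutual_info (joint_via (\<lambda>t x. P t (prod.swap x)) (prod_kernel W2 W1))"
proof (rule mutual_info_reindex[where A="aux_supp P" and B="out_supp W2 \<times> out_supp W1"
      and f=id and g=prod.swap])
  show "joint_via P (prod_kernel W1 W2) (id t) (prod.swap y) =
      joint_via (\<lambda>t x. P t (prod.swap x)) (prod_kernel W2 W1) t y" for t y
    unfolding joint_via_def prod_kernel_def by (subst sum_UNIV_swap[symmetric]) (simp add: mult_ac)
  show "joint_via P (prod_kernel W1 W2) t y \<noteq> 0 \<Longrightarrow>
      t \<in> id ` aux_supp P \<and> y \<in> prod.swap ` (out_supp W2 \<times> out_supp W1)" for t y
    using joint_via_prod_supp[of P W1 W2 t y] by (auto simp: image_iff)
next
  show "joint_via (\<lambda>t x. P t (prod.swap x)) (prod_kernel W2 W1) t y \<noteq> 0 \<Longrightarrow>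
      t \<in> aux_supp P \<and> y \<in> out_supp W2 \<times> out_supp W1" for t y
    using joint_via_prod_supp[of "\<lambda>t x. P t (prod.swap x)" W2 W1 t y] by (simp add: aux_supp_swap)
qed (use P W1 W2 in \<open>simp_all add: stoch_kernel_finite_supp\<close>)

lemma less_noisy_kernel_prod:
  fixes W1 :: "'x1::finite \<Rightarrow> 'y1 \<Rightarrow> real" and W2 :: "'x2::finite \<Rightarrow> 'y2 \<Rightarrow> real"
    and V1 :: "'x1 \<Rightarrow> 'z1 \<Rightarrow> real" and V2 :: "'x2 \<Rightarrow> 'z2 \<Rightarrow> real"
  assumes W1: "stoch_kernel W1" and W2: "stoch_kernel W2"
    and V1: "stoch_kernel V1" and V2: "stoch_kernel V2"
    and less_noisy1: "less_noisy_kernel V1 W1" and less_noisy2: "less_noisy_kernel V2 W2"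
  shows "less_noisy_kernel (prod_kernel V1 V2) (prod_kernel W1 W2)"
  unfolding less_noisy_kernel_def
proof (intro allI impI)
  fix P :: "nat \<Rightarrow> 'x1 \<times> 'x2 \<Rightarrow> real" assume P: "aux_pmf P"
  define Q where "Q t x = P t (prod.swap x)" for t x
  have Q: "aux_pmf Q" unfolding Q_def using P by (rule aux_pmf_swap)
  have "mutual_info (joint_via P (prod_kernel W1 W2)) \<le>
      mutual_info (joint_via P (prod_kernel W1 V2))"
    using less_noisy_kernel_prod_right[OF W1 W2 V2 less_noisy2] P
    unfolding less_noisy_kernel_def by blast
  also have "\<dots> = mutual_info (joint_via Q (prod_kernel V2 W1))"
    unfolding Q_def by (rule mutual_info_joint_via_prod_swap[OF aux_pmf_finite_supp[OF P] W1 V2])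
  also have "\<dots> \<le> mutual_info (joint_via Q (prod_kernel V2 V1))"
    using less_noisy_kernel_prod_right[OF V2 W1 V1 less_noisy1] Q
    unfolding less_noisy_kernel_def by blast
  also have "\<dots> = mutual_info (joint_via P (prod_kernel V1 V2))"
    using mutual_info_joint_via_prod_swap[OF aux_pmf_finite_supp[OF Q] V2 V1] by (simp add: Q_def)
  finally show "mutual_info (joint_via P (prod_kernel W1 W2)) \<le>
      mutual_info (joint_via P (prod_kernel V1 V2))" .
qed

lemma out_supp_relabel:
  assumes val: "\<And>x z. W' x (g z) = W x z" and off: "\<And>x y. y \<notin> range g \<Longrightarrow> W' x y = 0"
    and "W' x y \<noteq> 0"
  shows "y \<in> g ` out_supp W"
proof -
  obtain z where "y = g z" using off \<open>W' x y \<noteq> 0\<close> by blast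
  with val \<open>W' x y \<noteq> 0\<close> have "W x z \<noteq> 0" by simp
  with \<open>y = g z\<close> show ?thesis by (blast intro: out_suppI)
qed

lemma stoch_kernel_relabel:
  assumes W: "stoch_kernel W" and g: "inj g"
    and val: "\<And>x z. W' x (g z) = W x z" and off: "\<And>x y. y \<notin> range g \<Longrightarrow> W' x y = 0"
  shows "stoch_kernel W'"
proof (rule stoch_kernelI[where Y="g ` out_supp W"])
  show "0 \<le> W' x y" for x y
    using val off stoch_kernel_nonneg[OF W] by (cases "y \<in> range g") auto
  show "finite (g ` out_supp W)" using W by (simp add: stoch_kernel_finite_supp)
  show "W' x y \<noteq> 0 \<Longrightarrow> y \<in> g ` out_supp W" for x y
    using val off by (rule out_supp_relabel)
  show "(\<Sum>y\<in>g ` out_supp W. W' x y) = 1" for x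
    using stoch_kernel_sum[OF W, of x] inj_on_subset[OF g] by (simp add: sum.reindex val)
qed

lemma mutual_info_joint_via_relabel:
  assumes P: "finite (aux_supp P)" and W: "stoch_kernel W" and g: "inj g"
    and val: "\<And>x z. W' x (g z) = W x z" and off: "\<And>x y. y \<notin> range g \<Longrightarrow> W' x y = 0"
  shows "mutual_info (joint_via P W') = mutual_info (joint_via P W)"
proof (rule mutual_info_reindex[where A="aux_supp P" and B="out_supp W" and f=id and g=g])
  show "joint_via P W' t y \<noteq> 0 \<Longrightarrow> t \<in> id ` aux_supp P \<and> y \<in> g ` out_supp W" for t y
    using joint_via_supp[of P W' t y] out_supp_relabel[of W' g W, OF val off] unfolding out_supp_def by auto
qed (use P W g val joint_via_supp[of P W] in
      \<open>auto simp: stoch_kernel_finite_supp joint_via_def intro: inj_on_subset\<close>)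

lemma stoch_kernel_lift: "stoch_kernel W \<Longrightarrow> stoch_kernel (lift W)"
  by (rule stoch_kernel_relabel[where g=Base]) (auto simp: lift_def inj_def split: outp.split)

lemma mutual_info_joint_via_lift:
  "finite (aux_supp P) \<Longrightarrow> stoch_kernel W \<Longrightarrow>
    mutual_info (joint_via P (lift W)) = mutual_info (joint_via P W)"
  by (rule mutual_info_joint_via_relabel[where g=Base]) (auto simp: lift_def inj_def split: outp.split)

lemma less_noisy_kernel_lift:
  assumes "stoch_kernel W" and "stoch_kernel V" and "less_noisy_kernel V W"
  shows "less_noisy_kernel (lift V) (lift W)"
  using assms by (simp add: less_noisy_kernel_def mutual_info_joint_via_lift aux_pmf_finite_supp)

text \<open>\<open>W\<^sup>-\<close> and \<open>W\<^sup>+\<close> with pair-valued outputs, so that their output alphabets are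
  product sets.\<close>
definition minus_pair :: "(bool \<Rightarrow> 'a \<Rightarrow> real) \<Rightarrow> bool \<Rightarrow> 'a \<times> 'a \<Rightarrow> real" where
  "minus_pair W u1 y = (\<Sum>u2\<in>UNIV. 1/2 * W (u1 \<noteq> u2) (fst y) * W u2 (snd y))"

definition plus_pair :: "(bool \<Rightarrow> 'a \<Rightarrow> real) \<Rightarrow> bool \<Rightarrow> bool \<times> 'a \<times> 'a \<Rightarrow> real" where
  "plus_pair W u2 y = 1/2 * W (fst y \<noteq> u2) (fst (snd y)) * W u2 (snd (snd y))"

lemma out_supp_minus_pair: "out_supp (minus_pair W) \<subseteq> out_supp W \<times> out_supp W"
proof
  fix y assume "y \<in> out_supp (minus_pair W)"
  then obtain u1 where "minus_pair W u1 y \<noteq> 0"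
    unfolding out_supp_def by blast
  then obtain u2 where "1/2 * W (u1 \<noteq> u2) (fst y) * W u2 (snd y) \<noteq> 0"
    unfolding minus_pair_def by (rule sum.not_neutral_contains_not_neutral)
  then show "y \<in> out_supp W \<times> out_supp W"
    using out_suppI[of W "u1 \<noteq> u2" "fst y"] out_suppI[of W u2 "snd y"] by (simp add: mem_Times_iff)
qed

lemma out_supp_plus_pair: "out_supp (plus_pair W) \<subseteq> UNIV \<times> (out_supp W \<times> out_supp W)"
  unfolding out_supp_def plus_pair_def by auto

lemma stoch_kernel_minus_pair:
  assumes W: "stoch_kernel W"
  shows "stoch_kernel (minus_pair W)"
proof (rule stoch_kernelI[where Y="out_supp W \<times> out_supp W"])
  show "0 \<le> minus_pair W x y" for x y
    unfolding minus_pair_def by (auto intro!: sum_nonneg mult_nonneg_nonneg simp: stoch_kernel_nonneg[OF W])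
  show "finite (out_supp W \<times> out_supp W)"
    using W by (simp add: stoch_kernel_finite_supp)
  show "minus_pair W x y \<noteq> 0 \<Longrightarrow> y \<in> out_supp W \<times> out_supp W" for x y
    using out_suppI[of "minus_pair W" x y] out_supp_minus_pair by blast
  show "(\<Sum>y\<in>out_supp W \<times> out_supp W. minus_pair W x y) = 1" for x
    unfolding minus_pair_def
    by (subst sum.swap) (simp only: sum_Times_mult stoch_kernel_sum[OF W], simp add: UNIV_bool)
qed

lemma stoch_kernel_plus_pair:
  assumes W: "stoch_kernel W"
  shows "stoch_kernel (plus_pair W)"
proof (rule stoch_kernelI[where Y="(UNIV::bool set) \<times> (out_supp W \<times> out_supp W)"])
  show "0 \<le> plus_pair W x y" for x y
    unfolding plus_pair_def by (auto intro!: mult_nonneg_nonneg simp: stoch_kernel_nonneg[OF W])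
  show "finite ((UNIV::bool set) \<times> (out_supp W \<times> out_supp W))"
    using W by (intro finite_cartesian_product) (simp_all add: stoch_kernel_finite_supp)
  show "plus_pair W x y \<noteq> 0 \<Longrightarrow> y \<in> (UNIV::bool set) \<times> (out_supp W \<times> out_supp W)" for x y
    using out_suppI[of "plus_pair W" x y] out_supp_plus_pair by blast
  show "(\<Sum>y\<in>(UNIV::bool set) \<times> (out_supp W \<times> out_supp W). plus_pair W x y) = 1" for x
  proof -
    have "(\<Sum>y\<in>(UNIV::bool set) \<times> (out_supp W \<times> out_supp W). plus_pair W x y) =
        (\<Sum>u1\<in>UNIV. \<Sum>b\<in>out_supp W \<times> out_supp W. 1/2 * W (u1 \<noteq> x) (fst b) * W x (snd b))"
      unfolding plus_pair_def sum.cartesian_product by (intro sum.cong refl) (simp add: case_prod_beta)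
    then show ?thesis
      unfolding sum_Times_mult stoch_kernel_sum[OF W] by (simp add: UNIV_bool)
  qed
qed

lemma minus_ch_MinusOut: "minus_ch W x (case_prod MinusOut z) = minus_pair W x z"
  by (cases z) (simp add: minus_ch_def minus_pair_def)

lemma plus_ch_PlusOut: "plus_ch W x ((\<lambda>(u, a, b). PlusOut a b u) z) = plus_pair W x z"
  by (cases z) (simp add: plus_ch_def plus_pair_def)

lemma minus_ch_outside_range: "y \<notin> range (case_prod MinusOut) \<Longrightarrow> minus_ch W x y = 0"
  by (cases y) (auto simp: minus_ch_def)

lemma plus_ch_outside_range: "y \<notin> range (\<lambda>(u, a, b). PlusOut a b u) \<Longrightarrow> plus_ch W x y = 0"
proof (cases y)
  case (PlusOut a b u)
  then have "y \<in> range (\<lambda>(u, a, b). PlusOut a b u)"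
    using rangeI[of "\<lambda>(u, a, b). PlusOut a b u" "(u, a, b)"] by simp
  then show "y \<notin> range (\<lambda>(u, a, b). PlusOut a b u) \<Longrightarrow> plus_ch W x y = 0" by contradiction
qed (simp_all add: plus_ch_def)

lemma inj_MinusOut_pair: "inj (case_prod MinusOut)"
  by (auto simp: inj_def)

lemma inj_PlusOut_triple: "inj (\<lambda>(u, a, b). PlusOut a b u)"
  by (auto simp: inj_def)

lemma stoch_kernel_minus_ch: "stoch_kernel W \<Longrightarrow> stoch_kernel (minus_ch W)"
  by (rule stoch_kernel_relabel[OF stoch_kernel_minus_pair inj_MinusOut_pair minus_ch_MinusOut
        minus_ch_outside_range])

lemma stoch_kernel_plus_ch: "stoch_kernel W \<Longrightarrow> stoch_kernel (plus_ch W)"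
  by (rule stoch_kernel_relabel[OF stoch_kernel_plus_pair inj_PlusOut_triple plus_ch_PlusOut
        plus_ch_outside_range])

lemma mutual_info_joint_via_minus_ch:
  "finite (aux_supp P) \<Longrightarrow> stoch_kernel W \<Longrightarrow>
    mutual_info (joint_via P (minus_ch W)) = mutual_info (joint_via P (minus_pair W))"
  by (rule mutual_info_joint_via_relabel[OF _ stoch_kernel_minus_pair inj_MinusOut_pair
        minus_ch_MinusOut minus_ch_outside_range])

lemma mutual_info_joint_via_plus_ch:
  "finite (aux_supp P) \<Longrightarrow> stoch_kernel W \<Longrightarrow>
    mutual_info (joint_via P (plus_ch W)) = mutual_info (joint_via P (plus_pair W))"
  by (rule mutual_info_joint_via_relabel[OF _ stoch_kernel_plus_pair inj_PlusOut_triple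
        plus_ch_PlusOut plus_ch_outside_range])

text \<open>\<open>(T, U\<^sub>1) \<sim> P\<close> with \<open>U\<^sub>2\<close> uniform and independent, fed into \<open>W \<otimes> W\<close> as
  \<open>(U\<^sub>1 \<oplus> U\<^sub>2, U\<^sub>2)\<close>.\<close>
definition minus_input :: "('t \<Rightarrow> bool \<Rightarrow> real) \<Rightarrow> 't \<Rightarrow> bool \<times> bool \<Rightarrow> real" where
  "minus_input P t x = 1/2 * P t (fst x \<noteq> snd x)"

text \<open>\<open>(T, U\<^sub>2) \<sim> P\<close> fed into \<open>W \<otimes> W\<close> as \<open>(u\<^sub>1 \<oplus> U\<^sub>2, U\<^sub>2)\<close>, for a fixed \<open>u\<^sub>1\<close>.\<close>
definition plus_input :: "('t \<Rightarrow> bool \<Rightarrow> real) \<Rightarrow> bool \<Rightarrow> 't \<Rightarrow> bool \<times> bool \<Rightarrow> real" where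
  "plus_input P u1 t x = (if fst x = (u1 \<noteq> snd x) then P t (snd x) else 0)"

lemma joint_via_minus_pair: "joint_via P (minus_pair W) = joint_via (minus_input P) (prod_kernel W W)"
  unfolding joint_via_def minus_pair_def minus_input_def prod_kernel_def
  by (intro ext) (simp add: sum_UNIV_prod UNIV_bool algebra_simps)

lemma joint_via_plus_pair_slice:
  "joint_via P (plus_pair W) t (u1, b) = 1/2 * joint_via (plus_input P u1) (prod_kernel W W) t b"
  unfolding joint_via_def plus_pair_def plus_input_def prod_kernel_def
  by (cases u1) (simp_all add: sum_UNIV_prod UNIV_bool algebra_simps)

lemma joint_via_plus_pair_marginal:
  assumes W: "stoch_kernel W"
  shows "(\<Sum>b\<in>out_supp W \<times> out_supp W. joint_via P (plus_pair W) t (u1, b)) = 1/2 * (\<Sum>x\<in>UNIV. P t x)"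
proof -
  have "(\<Sum>b\<in>out_supp W \<times> out_supp W. joint_via P (plus_pair W) t (u1, b)) =
      (\<Sum>x\<in>UNIV. P t x * (\<Sum>b\<in>out_supp W \<times> out_supp W. 1/2 * W (u1 \<noteq> x) (fst b) * W x (snd b)))"
    unfolding joint_via_def plus_pair_def by (subst sum.swap) (simp add: sum_distrib_left)
  also have "\<dots> = 1/2 * (\<Sum>x\<in>UNIV. P t x)"
    unfolding sum_Times_mult stoch_kernel_sum[OF W] by (simp add: sum_distrib_left)
  finally show ?thesis .
qed

lemma aux_pmf_minus_input: "aux_pmf P \<Longrightarrow> aux_pmf (minus_input P)"
  by (rule aux_pmf_transfer)
    (auto simp: minus_input_def aux_pmf_nonneg aux_supp_def sum_UNIV_prod UNIV_bool)

lemma aux_pmf_plus_input: "aux_pmf P \<Longrightarrow> aux_pmf (plus_input P u1)"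
  by (rule aux_pmf_transfer)
    (auto simp: plus_input_def aux_pmf_nonneg aux_supp_def sum_UNIV_prod UNIV_bool split: if_splits)

lemma less_noisy_kernel_minus_ch:
  assumes W: "stoch_kernel W" and V: "stoch_kernel V" and less_noisy: "less_noisy_kernel V W"
  shows "less_noisy_kernel (minus_ch V) (minus_ch W)"
  unfolding less_noisy_kernel_def
proof (intro allI impI)
  fix P :: "nat \<Rightarrow> bool \<Rightarrow> real" assume P: "aux_pmf P"
  have "mutual_info (joint_via (minus_input P) (prod_kernel W W)) \<le>
      mutual_info (joint_via (minus_input P) (prod_kernel V V))"
    using less_noisy_kernel_prod[OF W W V V less_noisy less_noisy] aux_pmf_minus_input[OF P]
    unfolding less_noisy_kernel_def by blast
  then show "mutual_info (joint_via P (minus_ch W)) \<le> mutual_info (joint_via P (minus_ch V))"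
    using P W V by (simp add: mutual_info_joint_via_minus_ch aux_pmf_finite_supp joint_via_minus_pair)
qed

lemma less_noisy_kernel_plus_ch:
  assumes W: "stoch_kernel W" and V: "stoch_kernel V" and less_noisy: "less_noisy_kernel V W"
  shows "less_noisy_kernel (plus_ch V) (plus_ch W)"
  unfolding less_noisy_kernel_def
proof (intro allI impI)
  fix P :: "nat \<Rightarrow> bool \<Rightarrow> real" assume P: "aux_pmf P"
  have "mutual_info (joint_via P (plus_pair W)) \<le> mutual_info (joint_via P (plus_pair V))"
  proof (rule mutual_info_le_by_conditioning[where S="aux_supp P" and A=UNIV
        and B="out_supp W \<times> out_supp W" and B'="out_supp V \<times> out_supp V"])
    fix u1 :: bool
    have total: "(\<Sum>t\<in>aux_supp P. \<Sum>b\<in>out_supp W \<times> out_supp W. joint_via P (plus_pair W) t (u1, b)) = 1/2"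
      unfolding joint_via_plus_pair_marginal[OF W] sum_distrib_left[symmetric] aux_pmf_sum[OF P] by simp
    have "mutual_info (joint_via (plus_input P u1) (prod_kernel W W)) \<le>
        mutual_info (joint_via (plus_input P u1) (prod_kernel V V))"
      using less_noisy_kernel_prod[OF W W V V less_noisy less_noisy] aux_pmf_plus_input[OF P]
      unfolding less_noisy_kernel_def by blast
    then show "mutual_info (\<lambda>t b. joint_via P (plus_pair W) t (u1, b) /
          (\<Sum>t\<in>aux_supp P. \<Sum>b\<in>out_supp W \<times> out_supp W. joint_via P (plus_pair W) t (u1, b))) \<le>
        mutual_info (\<lambda>t b. joint_via P (plus_pair V) t (u1, b) /
          (\<Sum>t\<in>aux_supp P. \<Sum>b\<in>out_supp W \<times> out_supp W. joint_via P (plus_pair W) t (u1, b)))"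
      unfolding total by (simp add: joint_via_plus_pair_slice)
  next
    show "finite (aux_supp P)" using P by (rule aux_pmf_finite_supp)
    show "finite (out_supp W \<times> out_supp W)" "finite (out_supp V \<times> out_supp V)"
      using W V by (simp_all add: stoch_kernel_finite_supp)
    show "0 \<le> joint_via P (plus_pair W) t y" "0 \<le> joint_via P (plus_pair V) t y'" for t y y'
      using P W V by (simp_all add: joint_via_nonneg stoch_kernel_plus_pair)
    show "joint_via P (plus_pair W) t y \<noteq> 0 \<Longrightarrow> t \<in> aux_supp P \<and> y \<in> UNIV \<times> (out_supp W \<times> out_supp W)"
      "joint_via P (plus_pair V) t y' \<noteq> 0 \<Longrightarrow> t \<in> aux_supp P \<and> y' \<in> UNIV \<times> (out_supp V \<times> out_supp V)"
      for t y y'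
      using joint_via_supp[of P "plus_pair W" t y] joint_via_supp[of P "plus_pair V" t y']
        out_supp_plus_pair[of W] out_supp_plus_pair[of V] by blast+
    show "(\<Sum>b\<in>out_supp W \<times> out_supp W. joint_via P (plus_pair W) t (u1, b)) =
        (\<Sum>b\<in>out_supp V \<times> out_supp V. joint_via P (plus_pair V) t (u1, b))" for t u1
      by (simp add: joint_via_plus_pair_marginal W V)
  qed simp
  then show "mutual_info (joint_via P (plus_ch W)) \<le> mutual_info (joint_via P (plus_ch V))"
    using P W V by (simp add: mutual_info_joint_via_plus_ch aux_pmf_finite_supp)
qed

lemma stoch_kernel_transform: "stoch_kernel W \<Longrightarrow> stoch_kernel (transform \<sigma> W)"
  by (cases \<sigma>) (simp_all add: stoch_kernel_minus_ch stoch_kernel_plus_ch)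

lemma less_noisy_kernel_transform:
  "stoch_kernel W \<Longrightarrow> stoch_kernel V \<Longrightarrow> less_noisy_kernel V W \<Longrightarrow>
    less_noisy_kernel (transform \<sigma> V) (transform \<sigma> W)"
  by (cases \<sigma>) (simp_all add: less_noisy_kernel_minus_ch less_noisy_kernel_plus_ch)

lemma stoch_kernel_polar: "stoch_kernel W \<Longrightarrow> stoch_kernel (polar s W)"
  unfolding polar_def by (induction s arbitrary: W) (simp_all add: stoch_kernel_transform)

lemma less_noisy_kernel_polar:
  "stoch_kernel W \<Longrightarrow> stoch_kernel V \<Longrightarrow> less_noisy_kernel V W \<Longrightarrow>
    less_noisy_kernel (polar s V) (polar s W)"
  unfolding polar_def
  by (induction s arbitrary: W V) (simp_all add: stoch_kernel_transform less_noisy_kernel_transform)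

text \<open>\<open>T = X\<close> with \<open>X\<close> uniform, so that \<open>I(T;Y)\<close> is the symmetric capacity.\<close>
definition uniform_copy :: "nat \<Rightarrow> bool \<Rightarrow> real" where
  "uniform_copy t x = (if t = of_bool x then 1/2 else 0)"

lemma aux_pmf_uniform_copy: "aux_pmf uniform_copy"
  by (rule aux_pmfI[where S="{0, 1}"]) (auto simp: uniform_copy_def aux_supp_def UNIV_bool split: if_splits)

lemma sym_capacity_eq_mutual_info:
  assumes W: "stoch_kernel W"
  shows "sym_capacity W = mutual_info (joint_via uniform_copy W)"
  unfolding sym_capacity_def
proof (rule mutual_info_reindex[where A=UNIV and B="out_supp W" and f=of_bool and g=id, symmetric])
  show "joint_via uniform_copy W t y \<noteq> 0 \<Longrightarrow> t \<in> range of_bool \<and> y \<in> id ` out_supp W" for t y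
    using joint_via_supp[of uniform_copy W t y]
    by (auto simp: aux_supp_def uniform_copy_def split: if_splits)
  show "joint_via uniform_copy W (of_bool x) (id y) = 1/2 * W x y" for x y
    unfolding joint_via_def uniform_copy_def by (cases x) (simp_all add: UNIV_bool)
qed (use W in \<open>auto simp: stoch_kernel_finite_supp inj_def intro: out_suppI\<close>)

lemma sym_capacity_mono:
  "stoch_kernel W \<Longrightarrow> stoch_kernel V \<Longrightarrow> less_noisy_kernel V W \<Longrightarrow> sym_capacity W \<le> sym_capacity V"
  using aux_pmf_uniform_copy by (simp add: less_noisy_kernel_def sym_capacity_eq_mutual_info)

theorem mainTheorem9:
  fixes W :: "bool \<Rightarrow> 'y \<Rightarrow> real" and V :: "bool \<Rightarrow> 'z \<Rightarrow> real"
    and n :: nat and s :: "sign list"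
  assumes "channel W" and "channel V" and "less_noisy V W"
    and "n \<ge> 1" and "length s = n"
  shows "less_noisy (polar s (lift V)) (polar s (lift W)) \<and>
         sym_capacity (polar s (lift W)) \<le> sym_capacity (polar s (lift V))"
proof -
  have W: "stoch_kernel (lift W)" and V: "stoch_kernel (lift V)"
    using assms(1,2) by (simp_all add: channel_iff_stoch_kernel stoch_kernel_lift)
  have "less_noisy_kernel (lift V) (lift W)"
    using assms(1-3) by (simp add: channel_iff_stoch_kernel less_noisy_iff_kernel less_noisy_kernel_lift)
  then have "less_noisy_kernel (polar s (lift V)) (polar s (lift W))"
    using W V by (rule less_noisy_kernel_polar[rotated 2])
  moreover have "stoch_kernel (polar s (lift W))" and "stoch_kernel (polar s (lift V))"
    using W V by (simp_all add: stoch_kernel_polar)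
  ultimately show ?thesis
    by (simp add: less_noisy_iff_kernel sym_capacity_mono)
qed

end
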